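(* The law $\mathrm{x}\simeq(\mathrm{x}\diamond(\mathrm{x}\diamond\mathrm{y}))\diamond\mathrm{y}$ does not imply the law $\mathrm{x}\simeq(\mathrm{x}\diamond\mathrm{y})\diamond((\mathrm{x}\diamond\mathrm{y})\diamond\mathrm{y})$. Specifically, let $M=\langle a,b,c\mid a^2=b^2=c^2=1\rangle$ (the group of reduced words in $a,b,c$ with no two equal adjacent letters), define $f\colon M\to M$ by $f(1)=1$, $f(a)=b$, $f(b)=c$, $f(c)=a$, and $f(sw)=s$ for each letter $s\in\{a,b,c\}$ and each nonempty reduced word $w$ not starting with $s$; then the magma $(M,\diamond)$ with $x\diamond y=x\,f(x^{-1}y)$ satisfies the first law but not the second.
   Context: A magma satisfies a law if the identity holds for all assignments of variables; a law implies another if every magma satisfying the first satisfies the second. *)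

theory Defs
  imports Main
begin

datatype letter = A | B | C

definition reduced :: "letter list \<Rightarrow> bool" where
  "reduced w \<longleftrightarrow> (\<forall>i. Suc i < length w \<longrightarrow> w ! i \<noteq> w ! Suc i)"

definition Mset :: "letter list set" where
  "Mset = {w. reduced w}"

fun cons_red :: "letter \<Rightarrow> letter list \<Rightarrow> letter list" where
  "cons_red s [] = [s]"
| "cons_red s (t # w) = (if s = t then w else s # t # w)"

fun gmul :: "letter list \<Rightarrow> letter list \<Rightarrow> letter list" where
  "gmul [] v = v"
| "gmul (s # w) v = cons_red s (gmul w v)"

text \<open>Group inverse: every generator is an involution.\<close>
definition ginv :: "letter list \<Rightarrow> letter list" where
  "ginv w = rev w"

fun rot :: "letter \<Rightarrow> letter" where
  "rot A = B" | "rot B = C" | "rot C = A"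

fun fmap :: "letter list \<Rightarrow> letter list" where
  "fmap [] = []"
| "fmap [s] = [rot s]"
| "fmap (s # t # w) = [s]"

definition diamond :: "letter list \<Rightarrow> letter list \<Rightarrow> letter list" where
  "diamond x y = gmul x (fmap (gmul (ginv x) y))"

definition law1 :: "'a set \<Rightarrow> ('a \<Rightarrow> 'a \<Rightarrow> 'a) \<Rightarrow> bool" where
  "law1 S op \<longleftrightarrow> (\<forall>x\<in>S. \<forall>y\<in>S. x = op (op x (op x y)) y)"

definition law2 :: "'a set \<Rightarrow> ('a \<Rightarrow> 'a \<Rightarrow> 'a) \<Rightarrow> bool" where
  "law2 S op \<longleftrightarrow> (\<forall>x\<in>S. \<forall>y\<in>S. x = op (op x y) (op (op x y) y))"

end

theory Submission
  imports Defs
begin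

text \<open>The operation is invariant under left translation, \<open>(x v) \<diamond> (x w) = x (v \<diamond> w)\<close>, because
  \<open>x \<diamond> y\<close> only depends on \<open>x\<^sup>-\<^sup>1 y\<close>. Hence both laws need only be checked at \<open>x = 1\<close>, where
  \<open>1 \<diamond> u = f u\<close>. The first law there says \<open>f (g\<^sup>-\<^sup>1 u) = g\<^sup>-\<^sup>1\<close> for \<open>g = f (f u)\<close>, and \<open>g\<^sup>-\<^sup>1 = g\<close>
  since \<open>g\<close> is \<open>1\<close> or a letter. For \<open>u \<noteq> 1\<close> the
  element \<open>g\<close> is a single letter different from the first letter of \<open>u\<close>, so \<open>g u\<close> is a reduced
  word of length at least 2 and \<open>f\<close> returns its first letter \<open>g\<close>. The second law fails at
  \<open>x = 1\<close>, \<open>y = a\<close>, where its right-hand side is \<open>b c\<close>.\<close>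

lemma reduced_iff_successively: "reduced w \<longleftrightarrow> successively (\<noteq>) w"
  by (simp add: reduced_def successively_conv_nth)

lemma reduced_Nil [simp]: "reduced []"
  by (simp add: reduced_def)

lemma reduced_Cons: "reduced (s # w) \<longleftrightarrow> reduced w \<and> (w = [] \<or> hd w \<noteq> s)"
  by (cases w) (auto simp: reduced_iff_successively)

lemma reduced_cons_red: "reduced w \<Longrightarrow> reduced (cons_red s w)"
  by (cases w) (auto simp: reduced_Cons)

lemma reduced_gmul: "reduced v \<Longrightarrow> reduced (gmul u v)"
  by (induction u) (auto simp: reduced_cons_red)

lemma reduced_fmap: "reduced (fmap w)"
  by (cases w rule: fmap.cases) (auto simp: reduced_Cons)

lemma reduced_diamond: "reduced (diamond x y)"
  by (simp add: diamond_def reduced_gmul reduced_fmap)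

lemma cons_red_cons_red: "reduced w \<Longrightarrow> cons_red s (cons_red s w) = w"
  by (cases w rule: fmap.cases) (auto simp: reduced_Cons)

lemma gmul_cons_red: "reduced v \<Longrightarrow> gmul (cons_red s u) v = cons_red s (gmul u v)"
  by (cases u) (auto simp: cons_red_cons_red reduced_gmul)

lemma gmul_assoc: "reduced v \<Longrightarrow> reduced w \<Longrightarrow> gmul (gmul u v) w = gmul u (gmul v w)"
  by (induction u) (auto simp: gmul_cons_red reduced_gmul)

lemma gmul_append: "gmul (u @ v) w = gmul u (gmul v w)"
  by (induction u) auto

lemma gmul_Nil_right: "reduced v \<Longrightarrow> gmul v [] = v"
proof (induction v)
  case (Cons s v)
  then show ?case by (cases v) (auto simp: reduced_Cons)
qed simp

lemma gmul_rev_cancel: "reduced w \<Longrightarrow> gmul (rev u) (gmul u w) = w"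
  by (induction u) (auto simp: gmul_append cons_red_cons_red reduced_gmul)

lemma gmul_cancel_rev: "reduced w \<Longrightarrow> gmul u (gmul (rev u) w) = w"
  using gmul_rev_cancel[of w "rev u"] by simp

lemma diamond_gmul_left:
  assumes v: "reduced v" and w: "reduced w"
  shows "diamond (gmul x v) (gmul x w) = gmul x (diamond v w)"
proof -
  have "gmul x w = gmul (gmul x v) (gmul (rev v) w)"
    using v w by (simp add: gmul_assoc reduced_gmul gmul_cancel_rev)
  then have "gmul (ginv (gmul x v)) (gmul x w) = gmul (rev v) w"
    using w by (simp add: ginv_def gmul_rev_cancel reduced_gmul)
  then show ?thesis
    using v by (simp add: diamond_def ginv_def gmul_assoc reduced_fmap)
qed

lemma law1_at_Nil: "reduced u \<Longrightarrow> diamond (diamond [] (diamond [] u)) u = []"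
proof (cases u rule: fmap.cases)
  case (2 s)
  then show ?thesis by (cases s) (simp_all add: diamond_def ginv_def)
next
  case (3 s t w)
  then show ?thesis by (cases s) (simp_all add: diamond_def ginv_def)
qed (simp add: diamond_def ginv_def)

lemma law1_diamond: "law1 Mset diamond"
  unfolding law1_def Mset_def
proof (intro ballI)
  fix x y assume "x \<in> {w. reduced w}" "y \<in> {w. reduced w}"
  then have x: "reduced x" and y: "reduced y" by simp_all
  define u where "u = gmul (rev x) y"
  have u: "reduced u" and y_eq: "y = gmul x u"
    using y by (simp_all add: u_def reduced_gmul gmul_cancel_rev)
  have x_eq: "x = gmul x []"
    using x by (simp add: gmul_Nil_right)
  have "diamond (diamond x (diamond x y)) y
      = gmul x (diamond (diamond [] (diamond [] u)) u)"
    by (subst (1 2) x_eq) (simp add: y_eq u diamond_gmul_left reduced_diamond)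
  also have "\<dots> = x"
    using u x by (simp add: law1_at_Nil gmul_Nil_right)
  finally show "x = diamond (diamond x (diamond x y)) y" ..
qed

lemma not_law2_diamond: "\<not> law2 Mset diamond"
proof -
  have "diamond (diamond [] [A]) (diamond (diamond [] [A]) [A]) = [B, C]"
    by (simp add: diamond_def ginv_def)
  moreover have "[] \<in> Mset" "[A] \<in> Mset"
    by (simp_all add: Mset_def reduced_Cons)
  ultimately show ?thesis
    unfolding law2_def by force
qed

theorem mainTheorem15:
  shows "(\<forall>x\<in>Mset. \<forall>y\<in>Mset. diamond x y \<in> Mset)
       \<and> law1 Mset diamond \<and> \<not> law2 Mset diamond"
  using reduced_diamond law1_diamond not_law2_diamond by (simp add: Mset_def)

end
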